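(* Fix $p\in(0,\infty)$ and $\omega\in(0,1)$. Let $$\eta(p,\omega)=\inf_{\sigma\in[0,1)}\frac{1-\sigma^\omega}{1-\sigma}(1+\sigma^{p\omega})^{\frac{1-\omega}{p\omega}},$$ and suppose $D\in\mathbb R$ satisfies $D>\dfrac{2^{(1-\omega)(1+\frac1{p\omega})}}{\eta(p,\omega)}$. Then for any Banach space $(X,\|\cdot\|_X)$, the $\omega$-snowflake of $X$ embeds with $p$-average distortion $D$ into $X$: for every Borel probability measure $\mu$ on $X$ there is $f:X\to X$ with $\|f(x)-f(y)\|_X\le D\|x-y\|_X^\omega$ for all $x,y\in X$ and $\iint\|f(x)-f(y)\|_X^pd\mu(x)d\mu(y)\ge\iint\|x-y\|_X^{p\omega}d\mu(x)d\mu(y)$. *)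

theory Defs
  imports "HOL-Probability.Probability"
begin

definition eta :: "real \<Rightarrow> real \<Rightarrow> real" where
  "eta p \<omega> = (INF \<sigma>\<in>{0..<1::real}.
      (1 - \<sigma> powr \<omega>) / (1 - \<sigma>) * (1 + \<sigma> powr (p * \<omega>)) powr ((1 - \<omega>) / (p * \<omega>)))"

end

(*
  The map Phi(x) = |x|^(w-1) x is 2^(1-w)-Hoelder of exponent w on every normed space (this
  reduces to the concavity of t -> t^w - t), and eta(p,w) is exactly the constant of the reverse
  estimate  eta |a - b| <= |Phi a - Phi b| (|a|^(pw) + |b|^(pw))^((1-w)/(pw)).  With Young's
  inequality this yields, for f_z(x) = kappa Phi(x - z),
    |x - y|^(pw) <= w |f_z x - f_z y|^p + (1 - w) rho (|x - z|^(pw) + |y - z|^(pw)),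
  and the hypothesis on D says precisely that 2 rho < 1.  Integrating against mu x mu and picking
  a base point z at which the integral of |x - z|^(pw) is less than 1/(2 rho) times its mean over z
  (which is the right-hand side of the theorem) lets the error term be absorbed.
*)
theory Submission
  imports Defs
begin

lemma geo_mean_le_arith_mean_weighted:
  fixes a b w :: real
  assumes "0 \<le> a" "0 \<le> b" "0 \<le> w" "w \<le> 1"
  shows "a powr w * b powr (1 - w) \<le> w * a + (1 - w) * b"
proof (cases "a = 0 \<or> b = 0")
  case True
  then show ?thesis using assms by auto
next
  case False
  then show ?thesis using assms Youngs_inequality_0[of w "1 - w" a b] by simp
qed

lemma powr_le_tangent:
  fixes y z w :: real
  assumes "0 \<le> y" "0 < z" "0 \<le> w" "w \<le> 1"
  shows "y powr w \<le> z powr w + w * z powr (w - 1) * (y - z)"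
proof -
  have "y powr w = (y powr w * z powr (1 - w)) * z powr (w - 1)"
    using assms by (simp add: mult.assoc flip: powr_add)
  also have "\<dots> \<le> (w * y + (1 - w) * z) * z powr (w - 1)"
    using geo_mean_le_arith_mean_weighted[of y z w] assms by (intro mult_right_mono) auto
  also have "\<dots> = z powr w + w * z powr (w - 1) * (y - z)"
    using assms powr_add[of z "w - 1" 1] by (simp add: algebra_simps)
  finally show ?thesis .
qed

lemma concave_on_powr:
  assumes "0 \<le> w" "w \<le> 1"
  shows "concave_on {0..} (\<lambda>x::real. x powr w)"
proof (rule concave_on_linorderI)
  fix t x y :: real
  assume t: "0 < t" "t < 1" and xy: "x \<in> {0..}" "y \<in> {0..}" "x < y"
  define z where "z = (1 - t) *\<^sub>R x + t *\<^sub>R y"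
  define c where "c = w * z powr (w - 1)"
  have "0 < z" using t xy unfolding z_def by (simp add: add_nonneg_pos)
  then have "(1 - t) * x powr w + t * y powr w \<le> (1 - t) * (z powr w + c * (x - z)) + t * (z powr w + c * (y - z))"
    using powr_le_tangent[of _ z w] t xy assms unfolding c_def by (intro add_mono mult_left_mono) auto
  also have "\<dots> = z powr w" unfolding z_def by (simp add: algebra_simps)
  finally show "(1 - t) * x powr w + t * y powr w \<le> z powr w" .
qed simp

lemma one_plus_le_four_powr:
  fixes u :: real
  assumes "0 \<le> u"
  shows "1 + u \<le> 4 powr u"
proof -
  have "1 \<le> ln (4::real)" using exp_le ln_ge_iff[of 4 1] by simp
  then have "1 + u \<le> 1 + u * ln 4" using assms by (simp add: mult_le_cancel_left1)
  also have "\<dots> \<le> exp (u * ln 4)" using exp_ge_add_one_self by (simp add: add.commute)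
  finally show ?thesis by (simp add: powr_def mult.commute)
qed

lemma powr_minus_self_le_twice_near_one:
  fixes s w :: real
  assumes "1/2 \<le> s" "s \<le> 1" "0 \<le> w" "w \<le> 1"
  shows "s powr w - s \<le> 2 * (((1 - s) / 2) powr w - (1 - s) / 2)"
proof -
  define t where "t = 1 - s"
  have t: "0 \<le> t" "t \<le> 1/2" using assms unfolding t_def by auto
  have "s powr w - s \<le> (1 - w) * t"
    using powr_le_tangent[of s 1 w] assms unfolding t_def by (simp add: algebra_simps)
  also have "\<dots> \<le> 2 powr (1 - w) * t powr w - t"
  proof -
    have "t = t powr (1 - w) * t powr w"
      using t by (cases "t = 0") (simp_all flip: powr_add)
    also have "\<dots> \<le> (1/2) powr (1 - w) * t powr w"
      using t assms by (intro mult_right_mono powr_mono2) auto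
    finally have "(2 - w) * t \<le> (2 - w) * (1/2) powr (1 - w) * t powr w"
      using assms by (simp add: mult_left_mono mult.assoc)
    also have "\<dots> \<le> 4 powr (1 - w) * (1/2) powr (1 - w) * t powr w"
      using one_plus_le_four_powr[of "1 - w"] assms by (intro mult_right_mono) auto
    also have "4 powr (1 - w) * (1/2) powr (1 - w) = 2 powr (1 - w)"
      by (simp flip: powr_mult)
    finally show ?thesis by (simp add: algebra_simps)
  qed
  also have "\<dots> = 2 * ((t / 2) powr w - t / 2)"
    using t by (simp add: powr_divide powr_diff algebra_simps)
  finally show ?thesis unfolding t_def .
qed

lemma powr_minus_self_le_twice:
  fixes s x w :: real
  assumes "0 \<le> s" "s \<le> 1" "(1 - s) / 2 \<le> x" "x \<le> (1 + s) / 2" "0 \<le> w" "w \<le> 1"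
  shows "s powr w - s \<le> 2 * (x powr w - x)"
proof -
  define h where "h x = x powr w - x" for x :: real
  have concave: "concave_on {0..} h"
    unfolding h_def using assms by (auto intro!: concave_on_diff concave_on_powr simp: convex_on_ident)
  have mid: "h a + h b \<le> 2 * h ((a + b) / 2)" if "0 \<le> a" "0 \<le> b" for a b
    using concave_onD[OF concave, of "1/2" a b] that by (simp add: field_simps)
  have ge_min: "min (h a) (h b) \<le> h c" if "0 \<le> a" "a \<le> c" "c \<le> b" for a b c
  proof (rule concave_on_ge_min[where f = h])
    show "concave_on {a..b} h"
      using concave convex_on_subset[of "{0..}" "\<lambda>x. - h x" "{a..b}"] that
      unfolding concave_on_def by force
  qed (use that in auto)
  \<comment> \<open>by concavity \<open>{x. h s \<le> 2 * h x}\<close> is an interval, so only its end points matter\<close>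
  have right: "h s \<le> 2 * h ((1 + s) / 2)"
    using mid[of s 1] assms by (simp add: h_def add.commute)
  have left: "h s \<le> 2 * h ((1 - s) / 2)"
  proof (cases "s \<le> 1/2")
    case True
    have "h s \<le> 2 * h (s / 2)" using mid[of 0 s] assms by (simp add: h_def)
    then show ?thesis
      using ge_min[of "s / 2" "(1 - s) / 2" "(1 + s) / 2"] right True assms
      by (auto simp: min_le_iff_disj)
  next
    case False
    then show ?thesis using powr_minus_self_le_twice_near_one[of s w] assms by (simp add: h_def)
  qed
  have "min (h ((1 - s) / 2)) (h ((1 + s) / 2)) \<le> h x"
    using ge_min assms by simp
  then have "h s \<le> 2 * h x" using left right by (auto simp: min_le_iff_disj)
  then show ?thesis by (simp add: h_def)
qed

text \<open>Hoelder's inequality for \<open>radial_powr\<close> (below) normalized to \<open>norm a = 1\<close>,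
  \<open>norm b = s\<close>, \<open>norm (a - b) = d\<close>.\<close>

lemma holder_bound_normalized:
  fixes s d w :: real
  assumes "0 \<le> s" "s \<le> 1" "1 - s \<le> d" "d \<le> 1 + s" "0 \<le> w" "w \<le> 1"
  shows "d - s + s powr w \<le> 2 powr (1 - w) * d powr w"
proof -
  have "s powr w - s \<le> 2 * ((d / 2) powr w - d / 2)"
    using powr_minus_self_le_twice[of s "d / 2" w] assms by simp
  moreover have "2 * (d / 2) powr w = 2 powr (1 - w) * d powr w"
    using assms by (simp add: powr_divide powr_diff)
  ultimately show ?thesis by (simp add: algebra_simps)
qed

definition radial_powr :: "real \<Rightarrow> 'a::real_normed_vector \<Rightarrow> 'a" where
  "radial_powr w v = norm v powr (w - 1) *\<^sub>R v"

lemma radial_powr_0 [simp]: "radial_powr w 0 = 0"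
  by (simp add: radial_powr_def)

lemma norm_radial_powr [simp]: "norm (radial_powr w v) = norm v powr w"
  by (cases "v = 0") (simp_all add: radial_powr_def powr_add[of "norm v" "w - 1" 1, simplified])

lemma radial_powr_holder:
  fixes a b :: "'a::real_normed_vector"
  assumes "0 \<le> w" "w \<le> 1"
  shows "norm (radial_powr w a - radial_powr w b) \<le> 2 powr (1 - w) * norm (a - b) powr w"
proof -
  have ordered: "norm (radial_powr w a - radial_powr w b) \<le> 2 powr (1 - w) * norm (a - b) powr w"
    if ba: "norm b \<le> norm a" for a b :: 'a
  proof (cases "b = 0")
    case True
    have "1 * norm a powr w \<le> 2 powr (1 - w) * norm a powr w"
      using assms by (intro mult_right_mono ge_one_powr_ge_zero) auto
    then show ?thesis using True by simp
  next
    case False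
    define r s d where "r = norm a" and "s = norm b" and "d = norm (a - b)"
    have s0: "0 < s" and sr: "s \<le> r" using False ba unfolding r_def s_def by auto
    have r0: "0 < r" using s0 sr by linarith
    have d: "r - s \<le> d" "d \<le> r + s"
      unfolding r_def s_def d_def by (rule norm_triangle_ineq2, rule norm_triangle_ineq4)
    have mono: "r powr (w - 1) \<le> s powr (w - 1)" using s0 sr assms by (intro powr_mono2') auto
    have "radial_powr w a - radial_powr w b
        = r powr (w - 1) *\<^sub>R (a - b) - (s powr (w - 1) - r powr (w - 1)) *\<^sub>R b"
      unfolding radial_powr_def r_def s_def by (simp add: algebra_simps)
    then have "norm (radial_powr w a - radial_powr w b)
        \<le> r powr (w - 1) * d + (s powr (w - 1) - r powr (w - 1)) * s"
      using norm_triangle_ineq4 mono unfolding d_def s_def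
      by (metis abs_of_nonneg diff_ge_0_iff_ge norm_scaleR powr_ge_zero)
    also have "\<dots> = r powr w * (d / r - s / r + (s / r) powr w)"
      using r0 s0 powr_add[of s "w - 1" 1] by (simp add: powr_diff powr_divide field_simps)
    also have "\<dots> \<le> r powr w * (2 powr (1 - w) * (d / r) powr w)"
    proof (intro mult_left_mono holder_bound_normalized)
      show "1 - s / r \<le> d / r"
        using divide_right_mono[OF d(1), of r] r0 by (simp add: diff_divide_distrib)
      show "d / r \<le> 1 + s / r"
        using divide_right_mono[OF d(2), of r] r0 by (simp add: add_divide_distrib)
    qed (use r0 s0 sr assms in auto)
    also have "\<dots> = 2 powr (1 - w) * d powr w" using r0 by (simp add: powr_divide)
    finally show ?thesis unfolding d_def .
  qed
  show ?thesis
    using ordered[of b a] ordered[of a b] by (cases "norm b \<le> norm a") (auto simp: norm_minus_commute)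
qed

lemma radial_powr_shifted_holder:
  fixes x y z :: "'a::real_normed_vector"
  assumes "0 \<le> \<kappa>" "0 \<le> w" "w \<le> 1"
  shows "norm (\<kappa> *\<^sub>R radial_powr w (x - z) - \<kappa> *\<^sub>R radial_powr w (y - z))
    \<le> \<kappa> * 2 powr (1 - w) * norm (x - y) powr w"
  using mult_left_mono[OF radial_powr_holder[of w "x - z" "y - z"] assms(1)] assms
  by (simp add: mult.assoc flip: scaleR_diff_right)

lemma eta_le:
  fixes p w \<sigma> :: real
  assumes "0 \<le> w" "w \<le> 1" "0 \<le> \<sigma>" "\<sigma> < 1"
  shows "eta p w \<le> (1 - \<sigma> powr w) / (1 - \<sigma>) * (1 + \<sigma> powr (p * w)) powr ((1 - w) / (p * w))"
  unfolding eta_def using assms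
  by (intro cINF_lower bdd_belowI[where m = 0]) (auto intro!: mult_nonneg_nonneg divide_nonneg_nonneg powr_le1)

lemma eta_le_one: "0 \<le> w \<Longrightarrow> w \<le> 1 \<Longrightarrow> eta p w \<le> 1"
  using eta_le[of w 0 p] by simp

lemma eta_ge:
  fixes p w :: real
  assumes "0 < p" "0 < w" "w \<le> 1"
  shows "w \<le> eta p w"
  unfolding eta_def
proof (rule cINF_greatest)
  fix \<sigma> :: real
  assume \<sigma>: "\<sigma> \<in> {0..<1}"
  have "\<sigma> powr w \<le> 1 - w * (1 - \<sigma>)"
    using powr_le_tangent[of \<sigma> 1 w] \<sigma> assms by (simp add: algebra_simps)
  then have "w \<le> (1 - \<sigma> powr w) / (1 - \<sigma>)" using \<sigma> by (simp add: field_simps)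
  moreover have "1 \<le> (1 + \<sigma> powr (p * w)) powr ((1 - w) / (p * w))"
    using assms by (intro ge_one_powr_ge_zero) auto
  ultimately show "w \<le> (1 - \<sigma> powr w) / (1 - \<sigma>) * (1 + \<sigma> powr (p * w)) powr ((1 - w) / (p * w))"
    using assms mult_mono[of w _ 1] by fastforce
qed simp

lemma radial_powr_diff_lower:
  fixes a b :: "'a::real_normed_vector"
  assumes "0 \<le> w" "w \<le> 1" "norm b \<le> norm a"
  defines "\<sigma> \<equiv> norm b / norm a"
  shows "(1 - \<sigma> powr w) * norm (a - b)
    \<le> (1 - \<sigma>) * (norm a powr (1 - w) * norm (radial_powr w a - radial_powr w b))"
proof (cases "a = 0")
  case True
  then show ?thesis using assms by simp
next
  case False
  define r d where "r = norm a" and "d = norm (a - b)"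
  have r: "0 < r" using False unfolding r_def by simp
  have \<sigma>: "0 \<le> \<sigma>" "\<sigma> \<le> 1" and nb: "norm b = r * \<sigma>"
    using assms r unfolding \<sigma>_def r_def by (auto simp: field_simps)
  define c where "c = \<sigma> powr (w - 1)"
  define E where "E = norm (a - c *\<^sub>R b)"
  have "radial_powr w b = r powr (w - 1) *\<^sub>R c *\<^sub>R b"
    using r \<sigma> nb unfolding radial_powr_def c_def by (cases "b = 0") (simp_all add: powr_mult)
  moreover have "radial_powr w a = r powr (w - 1) *\<^sub>R a"
    unfolding radial_powr_def r_def ..
  ultimately have "radial_powr w a - radial_powr w b = r powr (w - 1) *\<^sub>R (a - c *\<^sub>R b)"
    by (simp add: scaleR_diff_right)
  then have rP: "r powr (1 - w) * norm (radial_powr w a - radial_powr w b) = E"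
    using r unfolding E_def by (simp add: mult.assoc[symmetric] flip: powr_add)
  have norm_cb: "norm (c *\<^sub>R b) = r * \<sigma> powr w"
    using \<sigma> nb powr_add[of \<sigma> "w - 1" 1] unfolding c_def by (cases "\<sigma> = 0") auto
  have norm_c1b: "norm ((c - 1) *\<^sub>R b) = r * (\<sigma> powr w - \<sigma>)"
  proof (cases "b = 0")
    case True
    then show ?thesis using nb r by simp
  next
    case False
    then have "\<sigma> \<noteq> 0" using nb by auto
    then have "1 \<le> c" using powr_mono'[of "w - 1" 0 \<sigma>] \<sigma> assms unfolding c_def by simp
    then have "norm ((c - 1) *\<^sub>R b) = c * norm b - norm b"
      by (subst norm_scaleR) (simp add: algebra_simps)
    also have "c * norm b = r * \<sigma> powr w" using norm_cb \<open>1 \<le> c\<close> by simp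
    finally show ?thesis using nb by (simp add: algebra_simps)
  qed
  have E1: "r - r * \<sigma> powr w \<le> E"
    using norm_triangle_ineq2[of a "c *\<^sub>R b"] norm_cb unfolding E_def r_def by simp
  have E2: "d \<le> E + r * (\<sigma> powr w - \<sigma>)"
    using norm_triangle_ineq[of "a - c *\<^sub>R b" "(c - 1) *\<^sub>R b"] norm_c1b
    unfolding E_def d_def by (simp add: algebra_simps)
  have "\<sigma> \<le> \<sigma> powr w" "\<sigma> powr w \<le> 1"
    using powr_mono'[of w 1 \<sigma>] \<sigma> assms by (auto intro: powr_le1)
  then have "(1 - \<sigma> powr w) * d \<le> (1 - \<sigma> powr w) * E + (r - r * \<sigma> powr w) * (\<sigma> powr w - \<sigma>)"
    using mult_left_mono[OF E2, of "1 - \<sigma> powr w"] by (simp add: algebra_simps)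
  also have "\<dots> \<le> (1 - \<sigma> powr w) * E + E * (\<sigma> powr w - \<sigma>)"
    using E1 \<open>\<sigma> \<le> \<sigma> powr w\<close> by (intro add_left_mono mult_right_mono) auto
  also have "\<dots> = (1 - \<sigma>) * E" by (simp add: algebra_simps)
  finally show ?thesis using rP unfolding d_def r_def by simp
qed

lemma radial_powr_diff_lower_eta:
  fixes a b :: "'a::real_normed_vector"
  assumes "0 < p" "0 < w" "w \<le> 1"
  shows "eta p w * norm (a - b) \<le> norm (radial_powr w a - radial_powr w b) *
    (norm a powr (p * w) + norm b powr (p * w)) powr ((1 - w) / (p * w))"
proof -
  define q where "q = (1 - w) / (p * w)"
  have ordered: "eta p w * norm (a - b) \<le> norm (radial_powr w a - radial_powr w b) *
      (norm a powr (p * w) + norm b powr (p * w)) powr q"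
    if ba: "norm b \<le> norm a" for a b :: 'a
  proof (cases "a = 0")
    case True
    then show ?thesis using ba by simp
  next
    case False
    define r d P where "r = norm a" and "d = norm (a - b)"
      and "P = norm (radial_powr w a - radial_powr w b)"
    define \<sigma> where "\<sigma> = norm b / norm a"
    have r: "0 < r" using False unfolding r_def by simp
    have \<sigma>: "0 \<le> \<sigma>" "\<sigma> \<le> 1" and nb: "norm b = r * \<sigma>"
      using ba r unfolding \<sigma>_def r_def by (auto simp: field_simps)
    have "(norm a powr (p * w) + norm b powr (p * w)) powr q
        = (r powr (p * w) * (1 + \<sigma> powr (p * w))) powr q"
      using r \<sigma> unfolding nb r_def by (simp add: powr_mult algebra_simps)
    also have "\<dots> = r powr (1 - w) * (1 + \<sigma> powr (p * w)) powr q"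
      using r \<sigma> assms unfolding q_def by (simp add: powr_mult powr_powr)
    finally have N: "(norm a powr (p * w) + norm b powr (p * w)) powr q
        = r powr (1 - w) * (1 + \<sigma> powr (p * w)) powr q" .
    show ?thesis
    proof (cases "\<sigma> = 1")
      case True
      then have "radial_powr w a - radial_powr w b = r powr (w - 1) *\<^sub>R (a - b)"
        using nb unfolding radial_powr_def r_def by (simp add: scaleR_diff_right)
      then have "r powr (1 - w) * P = d"
        using r unfolding P_def d_def by (simp add: mult.assoc[symmetric] flip: powr_add)
      then have "P * (norm a powr (p * w) + norm b powr (p * w)) powr q = 2 powr q * d"
        unfolding N True by (simp add: mult_ac)
      moreover have "eta p w * d \<le> 2 powr q * d"
        using eta_le_one[of w p] assms unfolding d_def q_def
        by (intro mult_right_mono order.trans[OF _ ge_one_powr_ge_zero]) auto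
      ultimately show ?thesis unfolding d_def P_def by simp
    next
      case False
      define k where "k = (1 - \<sigma> powr w) / (1 - \<sigma>)"
      have "(1 - \<sigma> powr w) * d \<le> (1 - \<sigma>) * (r powr (1 - w) * P)"
        using radial_powr_diff_lower[OF _ assms(3) ba] assms
        unfolding d_def P_def r_def \<sigma>_def by simp
      then have "k * d \<le> r powr (1 - w) * P"
        using \<sigma> False unfolding k_def by (simp add: field_simps)
      have "eta p w * d \<le> k * (1 + \<sigma> powr (p * w)) powr q * d"
        using eta_le[of w \<sigma> p] False \<sigma> assms unfolding k_def q_def d_def
        by (intro mult_right_mono) auto
      also have "\<dots> = (1 + \<sigma> powr (p * w)) powr q * (k * d)" by (simp add: mult_ac)
      also have "\<dots> \<le> (1 + \<sigma> powr (p * w)) powr q * (r powr (1 - w) * P)"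
        using \<open>k * d \<le> r powr (1 - w) * P\<close> by (rule mult_left_mono) simp
      finally have "eta p w * d \<le> (1 + \<sigma> powr (p * w)) powr q * (r powr (1 - w) * P)" .
      then show ?thesis using N unfolding d_def P_def by (simp add: algebra_simps)
    qed
  qed
  show ?thesis
    unfolding q_def[symmetric]
    using ordered[of a b] ordered[of b a]
    by (cases "norm b \<le> norm a") (auto simp: norm_minus_commute add.commute)
qed

lemma continuous_on_radial_powr [continuous_intros]:
  fixes f :: "'b::topological_space \<Rightarrow> 'a::real_normed_vector"
  assumes "0 < w" "w \<le> 1" "continuous_on S f"
  shows "continuous_on S (\<lambda>x. radial_powr w (f x))"
proof -
  have "isCont (radial_powr w) v" for v :: 'a
  proof -
    have "((\<lambda>u. norm (u - v)) \<longlongrightarrow> 0) (at v)"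
      by (intro tendsto_norm_zero LIM_zero tendsto_ident_at)
    then have "((\<lambda>u. 2 powr (1 - w) * norm (u - v) powr w) \<longlongrightarrow> 0) (at v)"
      using assms by (intro tendsto_mult_right_zero tendsto_zero_powrI) auto
    then have "((\<lambda>u. radial_powr w u - radial_powr w v) \<longlongrightarrow> 0) (at v)"
    proof (rule Lim_null_comparison[rotated])
      show "\<forall>\<^sub>F u in at v. norm (radial_powr w u - radial_powr w v) \<le> 2 powr (1 - w) * norm (u - v) powr w"
        using assms by (intro always_eventually allI radial_powr_holder) auto
    qed
    then show ?thesis unfolding isCont_def by (rule LIM_zero_cancel)
  qed
  then have "continuous_on UNIV (radial_powr w :: 'a \<Rightarrow> 'a)" by (simp add: continuous_on_eq_continuous_at)
  then show ?thesis using continuous_on_compose2[OF _ assms(3)] by blast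
qed

text \<open>Neither bound needs \<open>F\<close> to be measurable: for a non-separable space the inner
  integrals \<open>\<lambda>x. \<integral>\<^sup>+ y. F x y \<partial>M\<close> below are not known to be Borel, so only the
  lower-integral nature of \<^const>\<open>nn_integral\<close> is used.\<close>

lemma nn_integral_add_le:
  assumes h: "h \<in> borel_measurable M"
  shows "(\<integral>\<^sup>+ x. F x + h x \<partial>M) \<le> integral\<^sup>N M F + integral\<^sup>N M h"
proof -
  have "integral\<^sup>S M g \<le> integral\<^sup>N M F + integral\<^sup>N M h"
    if g: "simple_function M g" "g \<le> (\<lambda>x. F x + h x)" for g
  proof -
    note g_meas[measurable] = borel_measurable_simple_function[OF g(1)] and h[measurable]
    define G where "G x = (if h x = \<top> then 0 else g x - h x)" for x
    have "integral\<^sup>S M g = integral\<^sup>N M g" using nn_integral_eq_simple_integral[OF g(1)] by simp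
    also have "\<dots> \<le> (\<integral>\<^sup>+ x. G x + h x \<partial>M)"
      unfolding G_def
      by (intro nn_integral_mono) (auto simp: diff_add_self_ennreal not_le intro: less_imp_le)
    also have "\<dots> = integral\<^sup>N M G + integral\<^sup>N M h"
      unfolding G_def by (rule nn_integral_add) measurable
    also have "integral\<^sup>N M G \<le> integral\<^sup>N M F"
      using g(2) unfolding G_def le_fun_def
      by (intro nn_integral_mono) (auto simp: ennreal_minus_le_iff add.commute)
    finally show ?thesis by (simp add: add_right_mono)
  qed
  then show ?thesis unfolding nn_integral_def[of M "\<lambda>x. F x + h x"]
    by (intro SUP_least) auto
qed

lemma nn_integral_cmult_le:
  fixes c :: ennreal
  assumes "c < \<infinity>"
  shows "(\<integral>\<^sup>+ x. c * F x \<partial>M) \<le> c * integral\<^sup>N M F"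
proof (cases "c = 0")
  case False
  have "integral\<^sup>S M g \<le> c * integral\<^sup>N M F"
    if g: "simple_function M g" "g \<le> (\<lambda>x. c * F x)" for g
  proof -
    note borel_measurable_simple_function[OF g(1), measurable]
    have "integral\<^sup>S M g = integral\<^sup>N M g" using nn_integral_eq_simple_integral[OF g(1)] by simp
    also have "\<dots> = (\<integral>\<^sup>+ x. c * (g x / c) \<partial>M)"
      using False assms by (intro nn_integral_cong) (simp add: ennreal_times_divide mult.commute[of c] mult_divide_eq_ennreal)
    also have "\<dots> = c * (\<integral>\<^sup>+ x. g x / c \<partial>M)" by (rule nn_integral_cmult) measurable
    also have "(\<integral>\<^sup>+ x. g x / c \<partial>M) \<le> integral\<^sup>N M F"
      using g(2) False unfolding le_fun_def
      by (intro nn_integral_mono divide_le_posI_ennreal) (auto simp: zero_less_iff_neq_zero)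
    finally show ?thesis by (simp add: mult_left_mono)
  qed
  then show ?thesis unfolding nn_integral_def[of M "\<lambda>x. c * F x"]
    by (intro SUP_least) auto
qed simp

lemma (in prob_space) ex_less_of_nn_integral_less:
  assumes "integral\<^sup>N M C < c"
  shows "\<exists>z\<in>space M. C z < c"
proof (rule ccontr)
  assume "\<not> ?thesis"
  then have "(\<integral>\<^sup>+ z. c \<partial>M) \<le> integral\<^sup>N M C" by (intro nn_integral_mono) (simp add: not_less)
  then show False using assms emeasure_space_1 by simp
qed

lemma (in prob_space) ex_bounded_sublevel_emeasure_nonzero:
  fixes g :: "'a \<Rightarrow> real"
  assumes [measurable]: "g \<in> borel_measurable M"
  shows "\<exists>R::nat. emeasure M {y \<in> space M. \<bar>g y\<bar> \<le> real R} \<noteq> 0"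
proof (rule ccontr)
  assume "\<not> ?thesis"
  then have "emeasure M (\<Union>R::nat. {y \<in> space M. \<bar>g y\<bar> \<le> real R}) = 0"
    by (intro emeasure_UN_eq_0) auto
  moreover have "(\<Union>R::nat. {y \<in> space M. \<bar>g y\<bar> \<le> real R}) = space M"
    using real_arch_simple by blast
  ultimately show False using emeasure_space_1 by simp
qed

lemma (in prob_space) nn_integral_powr_abs_finite:
  fixes g :: "'a \<Rightarrow> real" and H :: "'a \<Rightarrow> 'a \<Rightarrow> real"
  assumes g[measurable]: "g \<in> borel_measurable M" and p: "0 < p"
    and H: "\<And>x y. \<bar>g x - g y\<bar> \<le> H x y"
    and fin: "(\<integral>\<^sup>+ x. \<integral>\<^sup>+ y. ennreal (H x y powr p) \<partial>M \<partial>M) < \<infinity>"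
  shows "(\<integral>\<^sup>+ x. ennreal (\<bar>g x\<bar> powr p) \<partial>M) < \<infinity>"
proof -
  obtain R :: nat where R: "emeasure M {y \<in> space M. \<bar>g y\<bar> \<le> real R} \<noteq> 0"
    using ex_bounded_sublevel_emeasure_nonzero[OF g] ..
  define S where "S = {y \<in> space M. \<bar>g y\<bar> \<le> real R}"
  have S: "S \<in> sets M" unfolding S_def by measurable
  define q where "q = measure M S"
  have q: "0 < q" using R emeasure_eq_measure[of S] unfolding S_def[symmetric] q_def
    by (simp add: zero_less_measure_iff)
  define IH where "IH x = (\<integral>\<^sup>+ y. ennreal (H x y powr p) \<partial>M)" for x
  have pointwise: "ennreal (\<bar>g x\<bar> powr p) \<le> ennreal (2 powr p / q) * IH x + ennreal ((2 * R) powr p)"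
    for x
  proof (cases "2 * R \<le> \<bar>g x\<bar>")
    case True
    have "ennreal ((\<bar>g x\<bar> / 2) powr p) * indicator S y \<le> ennreal (H x y powr p)" for y
    proof (cases "y \<in> S")
      case True
      then have "\<bar>g x\<bar> / 2 \<le> H x y"
        using \<open>2 * R \<le> \<bar>g x\<bar>\<close> H[of x y] unfolding S_def by auto
      then show ?thesis using True p by (simp add: ennreal_leI powr_mono2)
    qed simp
    then have "ennreal ((\<bar>g x\<bar> / 2) powr p) * emeasure M S \<le> IH x"
      unfolding IH_def using nn_integral_cmult_indicator[OF S] by (metis nn_integral_mono)
    then have lower: "ennreal ((\<bar>g x\<bar> / 2) powr p * q) \<le> IH x"
      using q by (simp add: emeasure_eq_measure q_def ennreal_mult)
    have "\<bar>g x\<bar> powr p = 2 powr p / q * ((\<bar>g x\<bar> / 2) powr p * q)"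
      using q by (simp add: powr_divide)
    then have "ennreal (\<bar>g x\<bar> powr p) = ennreal (2 powr p / q) * ennreal ((\<bar>g x\<bar> / 2) powr p * q)"
      using q by (simp only: ennreal_mult[symmetric] divide_nonneg_nonneg mult_nonneg_nonneg powr_ge_zero less_imp_le)
    also have "\<dots> \<le> ennreal (2 powr p / q) * IH x"
      using lower by (rule mult_left_mono) simp
    finally show ?thesis by (simp add: add_increasing2)
  next
    case False
    then have "ennreal (\<bar>g x\<bar> powr p) \<le> ennreal ((2 * R) powr p)"
      using p by (intro ennreal_leI powr_mono2) auto
    then show ?thesis by (simp add: add_increasing)
  qed
  have "(\<integral>\<^sup>+ x. ennreal (\<bar>g x\<bar> powr p) \<partial>M)
      \<le> (\<integral>\<^sup>+ x. ennreal (2 powr p / q) * IH x + ennreal ((2 * R) powr p) \<partial>M)"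
    using pointwise by (intro nn_integral_mono)
  also have "\<dots> \<le> (\<integral>\<^sup>+ x. ennreal (2 powr p / q) * IH x \<partial>M) + ennreal ((2 * R) powr p)"
    using nn_integral_add_le[of "\<lambda>_. ennreal ((2 * R) powr p)" M] emeasure_space_1 by simp
  also have "\<dots> \<le> ennreal (2 powr p / q) * (\<integral>\<^sup>+ x. IH x \<partial>M) + ennreal ((2 * R) powr p)"
    by (intro add_right_mono nn_integral_cmult_le) simp
  also have "\<dots> < \<infinity>"
    using fin unfolding IH_def by (simp add: ennreal_mult_less_top)
  finally show ?thesis .
qed

lemma (in prob_space) nn_integral_energy_le_base_point:
  fixes K :: "'a \<Rightarrow> 'a \<Rightarrow> ennreal" and F :: "'a \<Rightarrow> 'a \<Rightarrow> ennreal" and w c :: real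
  assumes [measurable]: "\<And>x. K x \<in> borel_measurable M" "\<And>x. F x \<in> borel_measurable M"
    and pointwise: "\<And>x y. K x y \<le> ennreal w * F x y + ennreal c * (K z x + K z y)"
  shows "(\<integral>\<^sup>+ x. \<integral>\<^sup>+ y. K x y \<partial>M \<partial>M)
    \<le> ennreal w * (\<integral>\<^sup>+ x. \<integral>\<^sup>+ y. F x y \<partial>M \<partial>M)
      + ennreal c * ((\<integral>\<^sup>+ x. K z x \<partial>M) + (\<integral>\<^sup>+ x. K z x \<partial>M))"
proof -
  define C where "C = (\<integral>\<^sup>+ x. K z x \<partial>M)"
  define IF where "IF x = (\<integral>\<^sup>+ y. F x y \<partial>M)" for x
  have "(\<integral>\<^sup>+ y. K x y \<partial>M) \<le> ennreal w * IF x + ennreal c * (K z x + C)" for x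
  proof -
    have "(\<integral>\<^sup>+ y. K x y \<partial>M) \<le> (\<integral>\<^sup>+ y. ennreal w * F x y + ennreal c * (K z x + K z y) \<partial>M)"
      using pointwise by (intro nn_integral_mono) simp
    also have "\<dots> = ennreal w * IF x + ennreal c * (K z x + C)"
      unfolding IF_def C_def by (simp add: nn_integral_add nn_integral_cmult emeasure_space_1)
    finally show ?thesis .
  qed
  then have "(\<integral>\<^sup>+ x. \<integral>\<^sup>+ y. K x y \<partial>M \<partial>M) \<le> (\<integral>\<^sup>+ x. ennreal w * IF x + ennreal c * (K z x + C) \<partial>M)"
    by (intro nn_integral_mono)
  also have "\<dots> \<le> (\<integral>\<^sup>+ x. ennreal w * IF x \<partial>M) + (\<integral>\<^sup>+ x. ennreal c * (K z x + C) \<partial>M)"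
    by (rule nn_integral_add_le) measurable
  also have "\<dots> \<le> ennreal w * (\<integral>\<^sup>+ x. IF x \<partial>M) + ennreal c * (C + C)"
    unfolding C_def
    by (intro add_mono nn_integral_cmult_le) (simp_all add: nn_integral_add nn_integral_cmult emeasure_space_1)
  finally show ?thesis unfolding IF_def C_def .
qed

lemma ennreal_le_of_le_convex_comb:
  fixes A B :: ennreal and w :: real
  assumes "B < \<infinity>" "0 < w" "w \<le> 1" and le: "B \<le> ennreal w * A + ennreal (1 - w) * B"
  shows "B \<le> A"
proof (cases A)
  case (real a)
  obtain b where b: "B = ennreal b" "0 \<le> b" using assms(1) by (cases B) auto
  have "ennreal w * A + ennreal (1 - w) * B = ennreal (w * a + (1 - w) * b)"
    using assms b real by (simp add: ennreal_mult)
  then have "ennreal b \<le> ennreal (w * a + (1 - w) * b)" using le b by simp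
  then have "b \<le> w * a + (1 - w) * b"
    using assms b real by (subst (asm) ennreal_le_iff) auto
  then show ?thesis using assms b real by (simp add: algebra_simps)
qed simp

text \<open>The mean over \<open>z\<close> of \<open>\<integral>\<^sup>+ x. K z x \<partial>M\<close> is the energy of \<open>K\<close> itself, so for
  some base point the error term is at most the fraction \<open>1 - w\<close> of it and can be absorbed.\<close>

lemma (in prob_space) ex_base_point_energy_le:
  fixes K :: "'a \<Rightarrow> 'a \<Rightarrow> ennreal" and F :: "'a \<Rightarrow> 'a \<Rightarrow> 'a \<Rightarrow> ennreal" and w \<rho> :: real
  assumes w: "0 < w" "w < 1" and \<rho>: "0 < \<rho>" "2 * \<rho> < 1"
    and meas: "\<And>z. K z \<in> borel_measurable M" "\<And>z x. F z x \<in> borel_measurable M"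
    and pointwise: "\<And>z x y. K x y \<le> ennreal w * F z x y + ennreal ((1 - w) * \<rho>) * (K z x + K z y)"
    and tail: "\<And>z. (\<integral>\<^sup>+ x. \<integral>\<^sup>+ y. F z x y \<partial>M \<partial>M) < \<infinity> \<Longrightarrow> (\<integral>\<^sup>+ x. K z x \<partial>M) < \<infinity>"
  shows "\<exists>z\<in>space M. (\<integral>\<^sup>+ x. \<integral>\<^sup>+ y. K x y \<partial>M \<partial>M) \<le> (\<integral>\<^sup>+ x. \<integral>\<^sup>+ y. F z x y \<partial>M \<partial>M)"
proof -
  define B where "B = (\<integral>\<^sup>+ x. \<integral>\<^sup>+ y. K x y \<partial>M \<partial>M)"
  define A where "A z = (\<integral>\<^sup>+ x. \<integral>\<^sup>+ y. F z x y \<partial>M \<partial>M)" for z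
  define C where "C z = (\<integral>\<^sup>+ x. K z x \<partial>M)" for z
  have step: "B \<le> ennreal w * A z + ennreal ((1 - w) * \<rho>) * (C z + C z)" for z
    unfolding A_def B_def C_def by (rule nn_integral_energy_le_base_point[OF meas pointwise])
  obtain z0 where z0: "z0 \<in> space M" using not_empty by blast
  consider (infinite) "B = \<infinity>" | (zero) "B = 0" | (positive) b where "B = ennreal b" "0 < b"
  proof (cases B)
    case (real b)
    then show ?thesis using that by (cases "b = 0") auto
  qed (use that in simp)
  then show ?thesis
  proof cases
    case infinite
    have "A z0 = \<infinity>"
    proof (rule ccontr)
      assume "A z0 \<noteq> \<infinity>"
      then have "A z0 < \<infinity>" "C z0 < \<infinity>" using tail unfolding A_def C_def by (auto simp: less_top)
      then have "ennreal w * A z0 + ennreal ((1 - w) * \<rho>) * (C z0 + C z0) < \<infinity>"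
        by (simp add: ennreal_mult_less_top)
      then have "B < \<infinity>" using step[of z0] by (rule le_less_trans[rotated])
      then show False using infinite by simp
    qed
    then show ?thesis using z0 unfolding A_def by force
  next
    case zero
    then show ?thesis using z0 unfolding B_def by auto
  next
    case (positive b)
    have "integral\<^sup>N M C = B" unfolding B_def C_def ..
    also have "B < ennreal (b / (2 * \<rho>))"
      using positive \<rho> by (simp add: ennreal_less_iff field_simps)
    finally obtain z where z: "z \<in> space M" "C z < ennreal (b / (2 * \<rho>))"
      using ex_less_of_nn_integral_less by blast
    have "C z + C z \<le> ennreal (b / (2 * \<rho>)) + ennreal (b / (2 * \<rho>))"
      using z(2) by (intro add_mono) auto
    also have "\<dots> = ennreal (b / \<rho>)"
      using positive \<rho> ennreal_plus[of "b / (2 * \<rho>)" "b / (2 * \<rho>)"] by simp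
    finally have "ennreal ((1 - w) * \<rho>) * (C z + C z) \<le> ennreal ((1 - w) * \<rho>) * ennreal (b / \<rho>)"
      by (rule mult_left_mono) simp
    also have "\<dots> = ennreal ((1 - w) * b)"
      using w \<rho> positive ennreal_mult[of "(1 - w) * \<rho>" "b / \<rho>"] by simp
    also have "\<dots> = ennreal (1 - w) * B"
      using w positive ennreal_mult[of "1 - w" b] by simp
    finally have "ennreal ((1 - w) * \<rho>) * (C z + C z) \<le> ennreal (1 - w) * B" .
    then have absorb: "B \<le> ennreal w * A z + ennreal (1 - w) * B"
      using step[of z] by (meson add_left_mono order_trans)
    have "B \<le> A z"
      using ennreal_le_of_le_convex_comb[OF _ w(1) _ absorb] positive w by simp
    then show ?thesis using z unfolding A_def B_def by auto
  qed
qed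

lemma powr_le_by_young:
  fixes p w L d P N :: real
  assumes "0 < p" "0 < w" "w < 1" "0 < L" "0 \<le> d" "0 \<le> P" "0 \<le> N"
    and "L * d \<le> P * N powr ((1 - w) / (p * w))"
  shows "d powr (p * w) \<le> w * P powr p + (1 - w) * (L powr (- (p * w) / (1 - w)) * N)"
proof -
  define q where "q = (1 - w) / (p * w)"
  have "d \<le> P * N powr q / L" using assms unfolding q_def by (simp add: field_simps)
  then have "d powr (p * w) \<le> (P * N powr q / L) powr (p * w)"
    using assms by (intro powr_mono2) auto
  also have "\<dots> = P powr (p * w) * N powr (1 - w) / L powr (p * w)"
    using assms unfolding q_def by (simp add: powr_divide powr_mult powr_powr)
  also have "\<dots> = (P powr p) powr w * (L powr (- (p * w) / (1 - w)) * N) powr (1 - w)"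
  proof -
    have "(L powr (- (p * w) / (1 - w))) powr (1 - w) = 1 / L powr (p * w)"
      using assms by (simp add: powr_powr powr_minus_divide powr_divide)
    then show ?thesis using assms by (simp add: powr_mult powr_powr mult.commute)
  qed
  also have "\<dots> \<le> w * P powr p + (1 - w) * (L powr (- (p * w) / (1 - w)) * N)"
    using assms by (intro geo_mean_le_arith_mean_weighted) auto
  finally show ?thesis .
qed

lemma radial_powr_energy_pointwise:
  fixes a b :: "'a::real_normed_vector"
  assumes "0 < p" "0 < w" "w < 1" "0 < \<kappa>"
  shows "norm (a - b) powr (p * w)
    \<le> w * (\<kappa> * norm (radial_powr w a - radial_powr w b)) powr p
      + (1 - w) * ((\<kappa> * eta p w) powr (- (p * w) / (1 - w)) * (norm a powr (p * w) + norm b powr (p * w)))"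
proof (rule powr_le_by_young)
  show "0 < \<kappa> * eta p w" using eta_ge[of p w] assms by simp
  show "\<kappa> * eta p w * norm (a - b) \<le> \<kappa> * norm (radial_powr w a - radial_powr w b) *
      (norm a powr (p * w) + norm b powr (p * w)) powr ((1 - w) / (p * w))"
    using mult_left_mono[OF radial_powr_diff_lower_eta[of p w a b], of \<kappa>] assms by (simp add: mult.assoc)
qed (use assms in auto)

lemma borel_measurable_continuous_on_sets_borel:
  "sets M = sets borel \<Longrightarrow> continuous_on UNIV g \<Longrightarrow> g \<in> borel_measurable M"
  unfolding measurable_cong_sets[OF _ refl] by (rule borel_measurable_continuous_onI)

lemma borel_measurable_ennreal_norm_powr:
  fixes g :: "'a::topological_space \<Rightarrow> 'b::real_normed_vector"
  assumes "sets M = sets borel" "continuous_on UNIV g" "0 < r"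
  shows "(\<lambda>x. ennreal (norm (g x) powr r)) \<in> borel_measurable M"
  using assms
  by (intro measurable_compose[OF _ measurable_ennreal] borel_measurable_continuous_on_sets_borel
      continuous_on_powr' continuous_intros) auto

lemma two_mult_powr_less_one:
  fixes p w L :: real
  assumes "0 < p" "0 < w" "w < 1" "2 powr ((1 - w) / (p * w)) < L"
  shows "2 * L powr (- (p * w) / (1 - w)) < 1"
proof -
  have "2 = (2 powr ((1 - w) / (p * w))) powr (p * w / (1 - w))"
    using assms by (simp add: powr_powr)
  also have "\<dots> < L powr (p * w / (1 - w))"
    using assms by (intro powr_less_mono2) auto
  finally show ?thesis by (simp add: powr_minus_divide divide_less_eq)
qed

lemma nn_integral_norm_powr_finite:
  fixes M :: "'a::real_normed_vector measure"
  assumes M: "prob_space M" "sets M = sets borel" and pw: "0 < p" "0 < w" "w \<le> 1" "0 < \<kappa>"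
    and fin: "(\<integral>\<^sup>+ x. \<integral>\<^sup>+ y. ennreal (norm (\<kappa> *\<^sub>R radial_powr w (x - z) - \<kappa> *\<^sub>R radial_powr w (y - z))
      powr p) \<partial>M \<partial>M) < \<infinity>"
  shows "(\<integral>\<^sup>+ x. ennreal (norm (z - x) powr (p * w)) \<partial>M) < \<infinity>"
proof -
  have "(\<integral>\<^sup>+ x. ennreal (\<bar>\<kappa> * norm (x - z) powr w\<bar> powr p) \<partial>M) < \<infinity>"
  proof (rule prob_space.nn_integral_powr_abs_finite[OF M(1) _ pw(1) _ fin])
    show "(\<lambda>x. \<kappa> * norm (x - z) powr w) \<in> borel_measurable M"
      using M pw by (intro borel_measurable_continuous_on_sets_borel continuous_on_powr' continuous_intros) auto
    fix x y
    show "\<bar>\<kappa> * norm (x - z) powr w - \<kappa> * norm (y - z) powr w\<bar>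
        \<le> norm (\<kappa> *\<^sub>R radial_powr w (x - z) - \<kappa> *\<^sub>R radial_powr w (y - z))"
      using norm_triangle_ineq3[of "radial_powr w (x - z)" "radial_powr w (y - z)"] pw
      by (simp add: abs_mult flip: right_diff_distrib scaleR_diff_right)
  qed
  also have "(\<integral>\<^sup>+ x. ennreal (\<bar>\<kappa> * norm (x - z) powr w\<bar> powr p) \<partial>M)
      = (\<integral>\<^sup>+ x. ennreal (\<kappa> powr p) * ennreal (norm (z - x) powr (p * w)) \<partial>M)"
    using pw by (intro nn_integral_cong)
      (simp add: ennreal_mult[symmetric] powr_mult powr_powr norm_minus_commute mult.commute)
  also have "\<dots> = ennreal (\<kappa> powr p) * (\<integral>\<^sup>+ x. ennreal (norm (z - x) powr (p * w)) \<partial>M)"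
    using M pw by (intro nn_integral_cmult borel_measurable_ennreal_norm_powr continuous_intros) auto
  finally show ?thesis using pw by (auto simp: ennreal_mult_less_top)
qed

lemma ex_radial_powr_energy_ge:
  fixes M :: "'a::real_normed_vector measure" and p w \<kappa> :: real
  assumes M: "prob_space M" "sets M = sets borel"
    and pw: "0 < p" "0 < w" "w < 1" and \<kappa>: "2 powr ((1 - w) / (p * w)) < \<kappa> * eta p w"
  shows "\<exists>z. (\<integral>\<^sup>+ x. \<integral>\<^sup>+ y. ennreal (norm (x - y) powr (p * w)) \<partial>M \<partial>M)
    \<le> (\<integral>\<^sup>+ x. \<integral>\<^sup>+ y. ennreal (norm (\<kappa> *\<^sub>R radial_powr w (x - z) - \<kappa> *\<^sub>R radial_powr w (y - z))
      powr p) \<partial>M \<partial>M)"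
proof -
  have \<kappa>0: "0 < \<kappa>" using \<kappa> eta_ge[of p w] pw by (smt (verit) powr_gt_zero zero_less_mult_iff)
  define \<rho> where "\<rho> = (\<kappa> * eta p w) powr (- (p * w) / (1 - w))"
  have \<rho>: "0 < \<rho>" "2 * \<rho> < 1"
    using two_mult_powr_less_one[OF pw \<kappa>] \<kappa> unfolding \<rho>_def by (auto intro: order.strict_trans1)
  define F where "F z x y = ennreal (norm (\<kappa> *\<^sub>R radial_powr w (x - z) - \<kappa> *\<^sub>R radial_powr w (y - z)) powr p)"
    for z x y :: 'a
  have "\<exists>z\<in>space M. (\<integral>\<^sup>+ x. \<integral>\<^sup>+ y. ennreal (norm (x - y) powr (p * w)) \<partial>M \<partial>M)
      \<le> (\<integral>\<^sup>+ x. \<integral>\<^sup>+ y. F z x y \<partial>M \<partial>M)"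
  proof (rule prob_space.ex_base_point_energy_le[OF M(1) pw(2,3) \<rho>])
    fix z x y :: 'a
    show "(\<lambda>y. ennreal (norm (z - y) powr (p * w))) \<in> borel_measurable M"
      using M pw by (intro borel_measurable_ennreal_norm_powr continuous_intros) auto
    show "F z x \<in> borel_measurable M"
      unfolding F_def using M pw by (intro borel_measurable_ennreal_norm_powr continuous_intros) auto
    have "norm (x - y) powr (p * w)
        \<le> w * (\<kappa> * norm (radial_powr w (x - z) - radial_powr w (y - z))) powr p
          + (1 - w) * \<rho> * (norm (z - x) powr (p * w) + norm (z - y) powr (p * w))"
      using radial_powr_energy_pointwise[of p w \<kappa> "x - z" "y - z"] pw \<kappa>0
      unfolding \<rho>_def by (simp add: norm_minus_commute[of z] mult.assoc)
    then have "ennreal (norm (x - y) powr (p * w))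
        \<le> ennreal (w * (\<kappa> * norm (radial_powr w (x - z) - radial_powr w (y - z))) powr p
          + (1 - w) * \<rho> * (norm (z - x) powr (p * w) + norm (z - y) powr (p * w)))"
      by (rule ennreal_leI)
    then show "ennreal (norm (x - y) powr (p * w))
        \<le> ennreal w * F z x y + ennreal ((1 - w) * \<rho>)
          * (ennreal (norm (z - x) powr (p * w)) + ennreal (norm (z - y) powr (p * w)))"
      unfolding F_def using pw \<rho> \<kappa>0 by (simp add: ennreal_mult flip: scaleR_diff_right)
  next
    fix z :: 'a
    assume "(\<integral>\<^sup>+ x. \<integral>\<^sup>+ y. F z x y \<partial>M \<partial>M) < \<infinity>"
    then show "(\<integral>\<^sup>+ x. ennreal (norm (z - x) powr (p * w)) \<partial>M) < \<infinity>"
      unfolding F_def using M pw \<kappa>0 by (intro nn_integral_norm_powr_finite) auto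
  qed
  then show ?thesis unfolding F_def by blast
qed

theorem proposition5p6:
  fixes p \<omega> D :: real
  assumes "p > 0" and "0 < \<omega>" and "\<omega> < 1"
    and "D > 2 powr ((1 - \<omega>) * (1 + 1 / (p * \<omega>))) / eta p \<omega>"
  shows "\<forall>M :: ('a::banach) measure. prob_space M \<and> sets M = sets borel \<longrightarrow>
    (\<exists>f :: 'a \<Rightarrow> 'a.
       (\<forall>x y. norm (f x - f y) \<le> D * norm (x - y) powr \<omega>) \<and>
       (\<integral>\<^sup>+ x. \<integral>\<^sup>+ y. ennreal (norm (f x - f y) powr p) \<partial>M \<partial>M)
         \<ge> (\<integral>\<^sup>+ x. \<integral>\<^sup>+ y. ennreal (norm (x - y) powr (p * \<omega>)) \<partial>M \<partial>M))"
proof (intro allI impI)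
  fix M :: "'a measure"
  assume M: "prob_space M \<and> sets M = sets borel"
  define \<kappa> where "\<kappa> = D / 2 powr (1 - \<omega>)"
  have "2 powr (1 - \<omega>) * 2 powr ((1 - \<omega>) / (p * \<omega>)) < D * eta p \<omega>"
    using assms eta_ge[of p \<omega>]
    by (simp add: divide_less_eq field_simps flip: powr_add)
  then have \<kappa>: "2 powr ((1 - \<omega>) / (p * \<omega>)) < \<kappa> * eta p \<omega>"
    unfolding \<kappa>_def by (simp add: field_simps)
  obtain z where z: "(\<integral>\<^sup>+ x. \<integral>\<^sup>+ y. ennreal (norm (x - y) powr (p * \<omega>)) \<partial>M \<partial>M)
    \<le> (\<integral>\<^sup>+ x. \<integral>\<^sup>+ y. ennreal (norm (\<kappa> *\<^sub>R radial_powr \<omega> (x - z) - \<kappa> *\<^sub>R radial_powr \<omega> (y - z))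
      powr p) \<partial>M \<partial>M)"
    using ex_radial_powr_energy_ge[of M p \<omega> \<kappa>] M assms \<kappa> by blast
  define f where "f x = \<kappa> *\<^sub>R radial_powr \<omega> (x - z)" for x
  have "0 < \<kappa>" using \<kappa> eta_ge[of p \<omega>] assms by (smt (verit) powr_gt_zero zero_less_mult_iff)
  then have "norm (f x - f y) \<le> D * norm (x - y) powr \<omega>" for x y
    using radial_powr_shifted_holder[of \<kappa> \<omega>] assms unfolding f_def \<kappa>_def by simp
  then show "\<exists>f :: 'a \<Rightarrow> 'a. (\<forall>x y. norm (f x - f y) \<le> D * norm (x - y) powr \<omega>) \<and>
       (\<integral>\<^sup>+ x. \<integral>\<^sup>+ y. ennreal (norm (f x - f y) powr p) \<partial>M \<partial>M)
         \<ge> (\<integral>\<^sup>+ x. \<integral>\<^sup>+ y. ennreal (norm (x - y) powr (p * \<omega>)) \<partial>M \<partial>M)"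
    using z unfolding f_def[symmetric] by (intro exI[of _ f] conjI) auto
qed

end
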